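(* For every finite poset $P$ there is a constant $C_P$ such that for all $k\ge1$, $$La([k]^2,P)\le\Big(\frac{|P|+h(P)}{2}-1\Big)k+C_P.$$ In particular, $La([k]^2,D_2)=\frac52k+O(1)$ and $La([k]^2,D_3)=3k+O(1)$.
   Context: $[k]^2$ is ordered coordinatewise. $h(P)$ is the height of $P$, the maximum size of a chain in $P$. $D_m$ is the poset on $m+2$ elements $a,b_1,\dots,b_m,c$ with relations $a<b_i<c$ for all $i$ (and $a<c$), the $b_i$ pairwise incomparable. For posets $P,R$, $P$ is a weak subposet of $R$ if there is an injection $i:P\to R$ with $p\le_P p'\Rightarrow i(p)\le_R i(p')$; a subset $F\subseteq Q$ is weak $P$-free if $P$ is not a weak subposet of $F$, and $La(Q,P)$ is the maximum size of a weak $P$-free subset of $Q$. *)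

theory Defs
  imports Complex_Main
begin

definition poset_on :: "'a set \<Rightarrow> ('a \<Rightarrow> 'a \<Rightarrow> bool) \<Rightarrow> bool" where
  "poset_on A le \<longleftrightarrow>
     (\<forall>x\<in>A. le x x) \<and>
     (\<forall>x\<in>A. \<forall>y\<in>A. le x y \<and> le y x \<longrightarrow> x = y) \<and>
     (\<forall>x\<in>A. \<forall>y\<in>A. \<forall>z\<in>A. le x y \<and> le y z \<longrightarrow> le x z)"

definition is_chain :: "('a \<Rightarrow> 'a \<Rightarrow> bool) \<Rightarrow> 'a set \<Rightarrow> bool" where
  "is_chain le C \<longleftrightarrow> (\<forall>x\<in>C. \<forall>y\<in>C. le x y \<or> le y x)"

definition height :: "'a set \<Rightarrow> ('a \<Rightarrow> 'a \<Rightarrow> bool) \<Rightarrow> nat" where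
  "height A le = Max {card C | C. C \<subseteq> A \<and> is_chain le C}"

definition weak_subposet ::
  "'a set \<Rightarrow> ('a \<Rightarrow> 'a \<Rightarrow> bool) \<Rightarrow> 'b set \<Rightarrow> ('b \<Rightarrow> 'b \<Rightarrow> bool) \<Rightarrow> bool" where
  "weak_subposet A leA B leB \<longleftrightarrow>
     (\<exists>i. inj_on i A \<and> i ` A \<subseteq> B \<and> (\<forall>p\<in>A. \<forall>q\<in>A. leA p q \<longrightarrow> leB (i p) (i q)))"

definition La ::
  "'b set \<Rightarrow> ('b \<Rightarrow> 'b \<Rightarrow> bool) \<Rightarrow> 'a set \<Rightarrow> ('a \<Rightarrow> 'a \<Rightarrow> bool) \<Rightarrow> nat" where
  "La Q leQ P leP = Max {card F | F. F \<subseteq> Q \<and> \<not> weak_subposet P leP F leQ}"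

definition grid :: "nat \<Rightarrow> (nat \<times> nat) set" where
  "grid k = {1..k} \<times> {1..k}"

definition grid_le :: "nat \<times> nat \<Rightarrow> nat \<times> nat \<Rightarrow> bool" where
  "grid_le x y \<longleftrightarrow> fst x \<le> fst y \<and> snd x \<le> snd y"

text \<open>D_m on carrier {0..m+1}: a = 0, b_i = i (1 \<le> i \<le> m), c = m+1.\<close>
definition D_set :: "nat \<Rightarrow> nat set" where
  "D_set m = {0..m+1}"

definition D_le :: "nat \<Rightarrow> nat \<Rightarrow> nat \<Rightarrow> bool" where
  "D_le m x y \<longleftrightarrow> x = y \<or> x = 0 \<or> y = m + 1"

end

theory Submission
  imports Defs
begin

text \<open>Cut the grid into about k/2 bands of four consecutive diagonals
  c \<le> x - y \<le> c + 3. Inside a band, list the points by rank x + y, putting the two outer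
  diagonals of a rank before the two inner ones. Then every point lies below every later point,
  except that at each cut at most one earlier point fails to lie below all later ones. So if a band
  contains |P| + h(P) - 1 points of F, we can take the last |R| of them for the top rank level R of P
  (an antichain), discard the single exception, and recurse on the remaining levels: P is a weak
  subposet of F. Hence a P-free F meets each band in at most |P| + h(P) - 2 points.

  D_2 and D_3 have height 3, which gives the upper bounds 5k/2 + O(1) and 3k + O(1). They are matched
  by the ranks k + 1, k + 2, k + 3 (for D_3), and by the same ranks with the points of odd x removed
  from rank k + 2 (for D_2): any two points of these sets have at most two, resp. one, points of
  the set strictly between them.\<close>

lemma finite_chain_sizes:
  "finite A \<Longrightarrow> finite {card C | C. C \<subseteq> A \<and> is_chain le C}"
  by (rule finite_subset[of _ "card ` Pow A"]) blast+

lemma card_chain_le_height: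
  assumes "finite A" "C \<subseteq> A" "is_chain le C"
  shows "card C \<le> height A le"
  unfolding height_def by (rule Max_ge[OF finite_chain_sizes[OF assms(1)]]) (use assms(2,3) in blast)

lemma height_attained:
  assumes "finite A"
  obtains C where "C \<subseteq> A" "is_chain le C" "card C = height A le"
proof -
  have "card {} \<in> {card C | C. C \<subseteq> A \<and> is_chain le C}"
    by (intro CollectI exI[of _ "{}"]) (simp add: is_chain_def)
  then have "{card C | C. C \<subseteq> A \<and> is_chain le C} \<noteq> {}"
    by auto
  with Max_in[OF finite_chain_sizes[OF assms, where le=le]]
  have "height A le \<in> {card C | C. C \<subseteq> A \<and> is_chain le C}"
    unfolding height_def by auto
  then show ?thesis
    using that by auto
qed

lemma height_down_set_less:
  assumes "finite P" "poset_on P leP" "x \<in> P" "y \<in> P" "leP x y" "x \<noteq> y"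
  shows "height {z \<in> P. leP z x} leP < height {z \<in> P. leP z y} leP"
proof -
  have le_refl: "leP z z" if "z \<in> P" for z
    using assms(2) that unfolding poset_on_def by blast
  have le_trans: "leP z y" if "z \<in> P" "leP z x" for z
    using assms(2-5) that unfolding poset_on_def by blast
  have "\<not> leP y x"
    using assms(2-6) unfolding poset_on_def by blast
  obtain C where C: "C \<subseteq> {z \<in> P. leP z x}" "is_chain leP C" "card C = height {z \<in> P. leP z x} leP"
    using height_attained[of "{z \<in> P. leP z x}"] assms(1) by auto
  have "C \<subseteq> P"
    using C(1) by blast
  then have "finite C"
    using assms(1) by (rule finite_subset)
  moreover have "y \<notin> C"
    using C(1) \<open>\<not> leP y x\<close> by blast
  moreover have "insert y C \<subseteq> {z \<in> P. leP z y}"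
    using C(1) le_trans le_refl assms(4) by blast
  moreover have "is_chain leP (insert y C)"
    using C le_trans le_refl assms(4) unfolding is_chain_def by blast
  ultimately have "card C + 1 \<le> height {z \<in> P. leP z y} leP"
    using card_chain_le_height[of "{z \<in> P. leP z y}" "insert y C" leP] assms(1) by simp
  then show ?thesis
    using C(3) by simp
qed

lemma poset_strict_rank:
  assumes "finite P" "poset_on P leP"
  obtains \<rho> where "\<forall>x\<in>P. \<rho> x < height P leP"
    and "\<forall>x\<in>P. \<forall>y\<in>P. leP x y \<and> x \<noteq> y \<longrightarrow> \<rho> x < \<rho> y"
proof -
  define down where "down x = {y \<in> P. leP y x}" for x
  have finite_down: "finite (down x)" for x
    using assms(1) by (simp add: down_def)
  have height_down_pos: "1 \<le> height (down x) leP" if "x \<in> P" for x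
  proof -
    have "{x} \<subseteq> down x" "is_chain leP {x}"
      using that assms(2) by (simp_all add: down_def is_chain_def poset_on_def)
    from card_chain_le_height[OF finite_down this] show ?thesis
      by simp
  qed
  have height_down_le: "height (down x) leP \<le> height P leP" for x
  proof -
    obtain C where "C \<subseteq> down x" "is_chain leP C" "card C = height (down x) leP"
      using height_attained[OF finite_down] .
    moreover have "down x \<subseteq> P"
      by (auto simp: down_def)
    ultimately show ?thesis
      using card_chain_le_height[OF assms(1)] by (metis order_trans)
  qed
  show thesis
  proof (rule that[of "\<lambda>x. height (down x) leP - 1"])
    show "\<forall>x\<in>P. height (down x) leP - 1 < height P leP"
      using height_down_pos height_down_le by (meson diff_less less_le_trans zero_less_one)
    show "\<forall>x\<in>P. \<forall>y\<in>P. leP x y \<and> x \<noteq> y \<longrightarrow> height (down x) leP - 1 < height (down y) leP - 1"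
      using height_down_pos height_down_set_less[OF assms] unfolding down_def by (meson diff_less_mono)
  qed
qed

lemma weak_subposet_mono:
  assumes "weak_subposet P leP F le" "F \<subseteq> F'"
  shows "weak_subposet P leP F' le"
  using assms unfolding weak_subposet_def by (meson order_trans)

lemma weak_subposet_antichain:
  assumes "finite A" "finite B" "card A \<le> card B"
    and "\<forall>x\<in>A. \<forall>y\<in>A. leA x y \<longrightarrow> x = y" and "\<forall>b\<in>B. leB b b"
  shows "weak_subposet A leA B leB"
proof -
  obtain f where f: "f ` A \<subseteq> B" "inj_on f A"
    using card_le_inj[OF assms(1-3)] by blast
  have "leB (f p) (f q)" if "p \<in> A" "q \<in> A" "leA p q" for p q
  proof -
    have "p = q" using that assms(4) by blast
    then show ?thesis using that(1) f(1) assms(5) by auto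
  qed
  with f show ?thesis
    unfolding weak_subposet_def by blast
qed

lemma weak_subposet_Un:
  assumes lower: "weak_subposet A leA B leB" and upper: "weak_subposet A' leA B' leB"
    and "B \<inter> B' = {}"
    and "\<forall>a\<in>A. \<forall>a'\<in>A'. \<not> leA a' a"
    and "\<forall>b\<in>B. \<forall>b'\<in>B'. leB b b'"
  shows "weak_subposet (A \<union> A') leA (B \<union> B') leB"
proof -
  obtain i where i: "inj_on i A" "i ` A \<subseteq> B" "\<forall>p\<in>A. \<forall>q\<in>A. leA p q \<longrightarrow> leB (i p) (i q)"
    using lower unfolding weak_subposet_def by blast
  obtain i' where i': "inj_on i' A'" "i' ` A' \<subseteq> B'"
    "\<forall>p\<in>A'. \<forall>q\<in>A'. leA p q \<longrightarrow> leB (i' p) (i' q)"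
    using upper unfolding weak_subposet_def by blast
  define g where "g x = (if x \<in> A then i x else i' x)" for x
  have "inj_on g (A \<union> A')"
  proof (rule inj_onI)
    fix p q assume "p \<in> A \<union> A'" "q \<in> A \<union> A'" "g p = g q"
    then show "p = q"
      using i(1,2) i'(1,2) assms(3) unfolding g_def inj_on_def
      by (simp split: if_splits) blast+
  qed
  moreover have "g ` (A \<union> A') \<subseteq> B \<union> B'"
    using i(2) i'(2) unfolding g_def by auto
  moreover have "leB (g p) (g q)" if "p \<in> A \<union> A'" "q \<in> A \<union> A'" "leA p q" for p q
  proof (cases "p \<in> A")
    case True
    moreover have "i p \<in> B" "q \<notin> A \<Longrightarrow> i' q \<in> B'"
      using True that(2) i(2) i'(2) by auto
    ultimately show ?thesis
      using that i(3) assms(5) unfolding g_def by (cases "q \<in> A") auto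
  next
    case False
    then have "q \<notin> A"
      using that assms(4) by blast
    then show ?thesis
      using False that i'(3) unfolding g_def by simp
  qed
  ultimately show ?thesis
    unfolding weak_subposet_def by (intro exI[of _ g] conjI ballI impI)
qed

lemma finite_free_sizes:
  "finite Q \<Longrightarrow> finite {card F | F. F \<subseteq> Q \<and> \<not> weak_subposet P leP F leQ}"
  by (rule finite_subset[of _ "card ` Pow Q"]) blast+

lemma card_le_La:
  assumes "finite Q" "F \<subseteq> Q" "\<not> weak_subposet P leP F leQ"
  shows "card F \<le> La Q leQ P leP"
  unfolding La_def by (rule Max_ge[OF finite_free_sizes[OF assms(1)]]) (use assms(2,3) in blast)

lemma La_attained:
  assumes "finite Q" "P \<noteq> {}"
  obtains F where "F \<subseteq> Q" "\<not> weak_subposet P leP F leQ" "card F = La Q leQ P leP"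
proof -
  have "\<not> weak_subposet P leP {} leQ"
    using assms(2) unfolding weak_subposet_def by blast
  then have "card {} \<in> {card F | F. F \<subseteq> Q \<and> \<not> weak_subposet P leP F leQ}"
    by (intro CollectI exI[of _ "{}"]) simp
  then have "{card F | F. F \<subseteq> Q \<and> \<not> weak_subposet P leP F leQ} \<noteq> {}"
    by auto
  with Max_in[OF finite_free_sizes[OF assms(1), where P=P and leP=leP and leQ=leQ]]
  have "La Q leQ P leP \<in> {card F | F. F \<subseteq> Q \<and> \<not> weak_subposet P leP F leQ}"
    unfolding La_def by auto
  then show ?thesis
    using that by auto
qed

section \<open>Embedding into nearly sorted sets\<close>

text \<open>Listing F by increasing key, every element lies below every later one, except that at
  each cut at most one element before the cut fails to lie below all elements after it.\<close>
definition nearly_sorted :: "('b \<Rightarrow> 'b \<Rightarrow> bool) \<Rightarrow> ('b \<Rightarrow> 'k::linorder) \<Rightarrow> 'b set \<Rightarrow> bool" where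
  "nearly_sorted le key F \<longleftrightarrow> inj_on key F \<and>
     (\<forall>a\<in>F. \<forall>a'\<in>F. \<forall>b\<in>F. \<forall>b'\<in>F.
        key a < key b \<and> key a < key b' \<and> key a' < key b \<and> key a' < key b' \<and>
        \<not> le a b \<and> \<not> le a' b' \<longrightarrow> a = a')"

lemma nearly_sorted_subset:
  "nearly_sorted le key F \<Longrightarrow> F' \<subseteq> F \<Longrightarrow> nearly_sorted le key F'"
  unfolding nearly_sorted_def using inj_on_subset by blast

lemma nearly_sorted_card_exceptions:
  assumes "finite F" "nearly_sorted le key F" "T \<subseteq> F" "\<forall>a\<in>F - T. \<forall>b\<in>T. key a < key b"
  shows "card {a \<in> F - T. \<exists>b\<in>T. \<not> le a b} \<le> 1"
proof -
  have "a = a'" if "a \<in> F - T" "a' \<in> F - T" "b \<in> T" "b' \<in> T" "\<not> le a b" "\<not> le a' b'"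
    for a a' b b'
  proof -
    have "key a < key b" "key a < key b'" "key a' < key b" "key a' < key b'"
      using that(1-4) assms(4) by auto
    then show ?thesis
      using that assms(2,3) unfolding nearly_sorted_def by blast
  qed
  then show ?thesis
    using assms(1) by (auto simp: card_le_Suc0_iff_eq)
qed

lemma exists_top_by_key:
  fixes key :: "'b \<Rightarrow> 'k::linorder"
  assumes "finite F" "inj_on key F" "r \<le> card F"
  shows "\<exists>T\<subseteq>F. card T = r \<and> (\<forall>a\<in>F - T. \<forall>b\<in>T. key a < key b)"
  using assms
proof (induction r arbitrary: F)
  case 0
  show ?case by (intro exI[of _ "{}"]) simp
next
  case (Suc r)
  then have "key ` F \<noteq> {}" by auto
  then obtain m where m: "m \<in> F" "key m = Max (key ` F)"
    using Max_in[of "key ` F"] Suc.prems(1) by (metis finite_imageI imageE)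
  have top: "key a < key m" if "a \<in> F" "a \<noteq> m" for a
  proof -
    have "key a \<le> key m" using that(1) m(2) Suc.prems(1) by simp
    moreover have "key a \<noteq> key m" using that m(1) Suc.prems(2) by (meson inj_onD)
    ultimately show ?thesis by simp
  qed
  have "inj_on key (F - {m})"
    using Suc.prems(2) by (rule inj_on_subset) blast
  moreover have "r \<le> card (F - {m})"
    using Suc.prems(1,3) m(1) by simp
  ultimately obtain T where T: "T \<subseteq> F - {m}" "card T = r" "\<forall>a\<in>F - {m} - T. \<forall>b\<in>T. key a < key b"
    using Suc.IH[of "F - {m}"] Suc.prems(1) by blast
  have "finite T" "m \<notin> T"
    using T(1) Suc.prems(1) finite_subset by auto
  then have "card (insert m T) = Suc r"
    using T(2) by simp
  moreover have "\<forall>a\<in>F - insert m T. \<forall>b\<in>insert m T. key a < key b"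
    using T(3) top by blast
  moreover have "insert m T \<subseteq> F"
    using T(1) m(1) by blast
  ultimately show ?case
    by blast
qed

lemma nearly_sorted_split_top:
  assumes "finite F" "nearly_sorted le key F" "r \<le> card F"
  obtains T F' where "T \<subseteq> F" "F' \<subseteq> F - T" "card T = r" "card F \<le> card F' + r + 1"
    and "\<forall>b\<in>F'. \<forall>t\<in>T. le b t"
proof -
  obtain T where T: "T \<subseteq> F" "card T = r" "\<forall>a\<in>F - T. \<forall>b\<in>T. key a < key b"
    using exists_top_by_key[OF assms(1) _ assms(3)] assms(2) unfolding nearly_sorted_def by blast
  define S where "S = {a \<in> F - T. \<exists>b\<in>T. \<not> le a b}"
  have "card S \<le> 1"
    unfolding S_def using nearly_sorted_card_exceptions T(1,3) assms(1,2) by blast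
  moreover have "F = (F - T - S) \<union> T \<union> S"
    using T(1) by (auto simp: S_def)
  then have "card F \<le> card (F - T - S) + card T + card S"
    using card_Un_le[of "F - T - S \<union> T" S] card_Un_le[of "F - T - S" T]
    by (metis add_right_mono order_trans)
  ultimately show thesis
    using T(1,2) by (intro that[of T "F - T - S"]) (auto simp: S_def)
qed

lemma weak_subposet_into_nearly_sorted:
  assumes "finite P" "\<forall>x\<in>P. \<rho> x < h" "\<forall>x\<in>P. \<forall>y\<in>P. leP x y \<and> x \<noteq> y \<longrightarrow> \<rho> x < \<rho> y"
    and "finite F" "nearly_sorted le key F" "\<forall>b\<in>F. le b b"
    and "card P + h \<le> card F + 1"
  shows "weak_subposet P leP F le"
  using assms
proof (induction h arbitrary: P F)
  case 0
  then show ?case by (simp add: weak_subposet_def)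
next
  case (Suc h)
  define R where "R = {x \<in> P. \<rho> x = h}"
  define P' where "P' = P - R"
  have card_P: "card P = card P' + card R"
    unfolding P'_def R_def using Suc.prems(1) by (simp add: card_Diff_subset card_mono)
  then have "card R \<le> card F"
    using Suc.prems(7) by linarith
  then obtain T F' where T: "T \<subseteq> F" "F' \<subseteq> F - T" "card T = card R"
    "card F \<le> card F' + card R + 1" "\<forall>b\<in>F'. \<forall>t\<in>T. le b t"
    using nearly_sorted_split_top[OF Suc.prems(4,5)] by blast
  have "F' \<subseteq> F"
    using T(2) by blast
  have "card P' + h \<le> card F' + 1"
    using Suc.prems(7) card_P T(4) by linarith
  moreover have "\<forall>x\<in>P'. \<rho> x < h"
    using Suc.prems(2) by (auto simp: P'_def R_def less_Suc_eq)
  ultimately have "weak_subposet P' leP F' le"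
    using Suc.prems(1,3-6) \<open>F' \<subseteq> F\<close> nearly_sorted_subset[of le key F F']
    by (intro Suc.IH) (auto simp: P'_def intro: finite_subset)
  moreover have "weak_subposet R leP T le"
  proof (rule weak_subposet_antichain)
    show "finite R" "finite T"
      using Suc.prems(1,4) T(1) finite_subset by (auto simp: R_def)
    show "\<forall>x\<in>R. \<forall>y\<in>R. leP x y \<longrightarrow> x = y"
      using Suc.prems(3) unfolding R_def by fastforce
  qed (use T Suc.prems(6) in auto)
  moreover have "\<forall>a\<in>P'. \<forall>r\<in>R. \<not> leP r a"
    using Suc.prems(2,3) unfolding P'_def R_def by fastforce
  ultimately have "weak_subposet (P' \<union> R) leP (F' \<union> T) le"
    using T(2,5) by (intro weak_subposet_Un) auto
  moreover have "P' \<union> R = P" "F' \<union> T \<subseteq> F"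
    using T(1,2) by (auto simp: P'_def R_def)
  ultimately show ?case
    using weak_subposet_mono by metis
qed

section \<open>Diagonal bands of the grid\<close>

lemma finite_grid: "finite (grid k)"
  unfolding grid_def by simp

definition diag_band :: "int \<Rightarrow> (nat \<times> nat) set" where
  "diag_band c = {u. c \<le> int (fst u) - int (snd u) \<and> int (fst u) - int (snd u) \<le> c + 3}"

definition inner_diag :: "int \<Rightarrow> nat \<times> nat \<Rightarrow> bool" where
  "inner_diag c u \<longleftrightarrow> c + 1 \<le> int (fst u) - int (snd u) \<and> int (fst u) - int (snd u) \<le> c + 2"

definition band_key :: "int \<Rightarrow> nat \<times> nat \<Rightarrow> int" where
  "band_key c u = 2 * (int (fst u) + int (snd u)) + (if inner_diag c u then 1 else 0)"

lemma even_band_key: "even (band_key c u) \<longleftrightarrow> \<not> inner_diag c u"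
  by (simp add: band_key_def)

lemma band_key_inj: "inj_on (band_key c) (diag_band c)"
proof (rule inj_onI)
  fix u v
  assume u: "u \<in> diag_band c" and v: "v \<in> diag_band c" and key: "band_key c u = band_key c v"
  define t t' where "t = int (fst u) - int (snd u) - c" and "t' = int (fst v) - int (snd v) - c"
  have flag: "inner_diag c u \<longleftrightarrow> inner_diag c v"
    using key even_band_key by metis
  then have sum: "int (fst u) + int (snd u) = int (fst v) + int (snd v)"
    using key by (simp add: band_key_def)
  (* two points of equal rank lie on diagonals of equal parity *)
  then have "t - t' = 2 * (int (snd v) - int (snd u))"
    unfolding t_def t'_def by (simp add: algebra_simps)
  then have "even (t - t')"
    by simp
  moreover have "0 \<le> t" "t \<le> 3" "0 \<le> t'" "t' \<le> 3"
    using u v unfolding diag_band_def t_def t'_def by auto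
  moreover have "(1 \<le> t \<and> t \<le> 2) \<longleftrightarrow> (1 \<le> t' \<and> t' \<le> 2)"
    using flag unfolding inner_diag_def t_def t'_def by auto
  ultimately have "t = t'"
    by presburger
  then have "int (fst u) = int (fst v)" "int (snd u) = int (snd v)"
    using sum unfolding t_def t'_def by (simp_all add: algebra_simps)
  then show "u = v"
    by (simp add: prod_eq_iff)
qed

lemma band_key_incomparable:
  assumes "u \<in> diag_band c" "v \<in> diag_band c" "band_key c u < band_key c v" "\<not> grid_le u v"
  shows "\<not> inner_diag c u" "band_key c v \<le> band_key c u + 2"
proof -
  have "int (fst v) + 1 \<le> int (fst u) \<or> int (snd v) + 1 \<le> int (snd u)"
    using assms(4) by (auto simp: grid_le_def)
  then show "\<not> inner_diag c u" "band_key c v \<le> band_key c u + 2"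
    using assms(1-3) unfolding diag_band_def inner_diag_def band_key_def mem_Collect_eq
    by (elim disjE; simp split: if_splits; linarith)+
qed

lemma nearly_sorted_band:
  assumes "F \<subseteq> diag_band c"
  shows "nearly_sorted grid_le (band_key c) F"
  unfolding nearly_sorted_def
proof (intro conjI ballI impI)
  show "inj_on (band_key c) F"
    using band_key_inj assms by (rule inj_on_subset)
  fix a a' b b'
  assume "a \<in> F" "a' \<in> F" "b \<in> F" "b' \<in> F"
    and less: "band_key c a < band_key c b \<and> band_key c a < band_key c b' \<and>
      band_key c a' < band_key c b \<and> band_key c a' < band_key c b' \<and>
      \<not> grid_le a b \<and> \<not> grid_le a' b'"
  then have band: "a \<in> diag_band c" "a' \<in> diag_band c" "b \<in> diag_band c" "b' \<in> diag_band c"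
    using assms by auto
  have "even (band_key c a)" "band_key c b \<le> band_key c a + 2"
    "even (band_key c a')" "band_key c b' \<le> band_key c a' + 2"
    using less band_key_incomparable[OF band(1,3)] band_key_incomparable[OF band(2,4)]
    by (auto simp: even_band_key)
  moreover from this have "band_key c a - band_key c a' < 2" "band_key c a' - band_key c a < 2"
    using less by linarith+
  ultimately have "band_key c a = band_key c a'"
    by presburger
  then show "a = a'"
    using band_key_inj band(1,2) by (meson inj_onD)
qed

lemma card_free_inter_diag_band:
  assumes "finite P" "poset_on P leP" "finite F" "\<not> weak_subposet P leP F grid_le"
  shows "card (F \<inter> diag_band c) + 2 \<le> card P + height P leP"
proof (rule ccontr)
  assume "\<not> ?thesis"
  then have large: "card P + height P leP \<le> card (F \<inter> diag_band c) + 1"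
    by simp
  obtain \<rho> where "\<forall>x\<in>P. \<rho> x < height P leP" "\<forall>x\<in>P. \<forall>y\<in>P. leP x y \<and> x \<noteq> y \<longrightarrow> \<rho> x < \<rho> y"
    using poset_strict_rank[OF assms(1,2)] .
  moreover have "nearly_sorted grid_le (band_key c) (F \<inter> diag_band c)"
    by (rule nearly_sorted_band) blast
  ultimately have "weak_subposet P leP (F \<inter> diag_band c) grid_le"
    using assms(1,3) large
    by (intro weak_subposet_into_nearly_sorted) (auto simp: grid_le_def)
  then show False
    using assms(4) weak_subposet_mono by blast
qed

lemma grid_subset_bands:
  "grid k \<subseteq> (\<Union>j\<le>(k - 1) div 2. diag_band (4 * int j + 1 - int k))"
proof
  fix u assume "u \<in> grid k"
  then obtain x y where u: "u = (x, y)" "1 \<le> x" "x \<le> k" "1 \<le> y" "y \<le> k"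
    unfolding grid_def by auto
  define d where "d = int x - int y + int k - 1"
  define j where "j = nat (d div 4)"
  have "0 \<le> d" "d \<le> 2 * int k - 2"
    using u unfolding d_def by auto
  then have "4 * int j \<le> d" "d \<le> 4 * int j + 3"
    unfolding j_def by auto
  then have "j \<le> (k - 1) div 2" "u \<in> diag_band (4 * int j + 1 - int k)"
    using \<open>d \<le> 2 * int k - 2\<close> u unfolding diag_band_def d_def by auto
  then show "u \<in> (\<Union>j\<le>(k - 1) div 2. diag_band (4 * int j + 1 - int k))"
    by blast
qed

lemma card_free_subset_grid:
  assumes "finite P" "poset_on P leP" "F \<subseteq> grid k" "\<not> weak_subposet P leP F grid_le"
  shows "card F + 2 * ((k - 1) div 2 + 1) \<le> ((k - 1) div 2 + 1) * (card P + height P leP)"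
proof -
  define J where "J = (k - 1) div 2"
  define band where "band j = F \<inter> diag_band (4 * int j + 1 - int k)" for j :: nat
  have "finite F"
    using assms(3) finite_grid finite_subset by blast
  have "F = (\<Union>j\<le>J. band j)"
    using assms(3) grid_subset_bands unfolding band_def J_def by blast
  then have "card F \<le> (\<Sum>j\<le>J. card (band j))"
    by (metis card_UN_le finite_atMost)
  then have "card F + 2 * (J + 1) \<le> (\<Sum>j\<le>J. card (band j) + 2)"
    unfolding sum.distrib by simp
  also have "\<dots> \<le> (\<Sum>j\<le>J. card P + height P leP)"
    unfolding band_def
    by (intro sum_mono card_free_inter_diag_band) (use assms(1,2,4) \<open>finite F\<close> in auto)
  finally show ?thesis
    by (simp add: J_def)
qed

lemma La_grid_le:
  assumes "finite P" "P \<noteq> {}" "poset_on P leP" "1 \<le> k"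
  shows "real (La (grid k) grid_le P leP)
    \<le> ((real (card P) + real (height P leP)) / 2 - 1) * real k
       + (real (card P) + real (height P leP)) / 2"
proof -
  obtain F where F: "F \<subseteq> grid k" "\<not> weak_subposet P leP F grid_le" "card F = La (grid k) grid_le P leP"
    using La_attained[OF finite_grid assms(2)] .
  define N where "N = (k - 1) div 2 + 1"
  define X where "X = real (card P) + real (height P leP)"
  have "card F + 2 * N \<le> N * (card P + height P leP)"
    using card_free_subset_grid[OF assms(1,3) F(1,2)] by (simp add: N_def)
  then have "real (card F + 2 * N) \<le> real (N * (card P + height P leP))"
    by (simp only: of_nat_le_iff)
  then have bound: "real (card F) + 2 * real N \<le> real N * X"
    by (simp add: X_def)
  have "1 \<le> N" "2 * N \<le> k + 1"
    using assms(4) unfolding N_def by presburger+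
  then have N: "1 \<le> real N" "2 * real N \<le> real k + 1"
    by linarith+
  have "real N * 2 \<le> real N * X"
    using bound by simp
  then have "2 \<le> X"
    using N(1) by simp
  have "real (card F) \<le> real N * (X - 2)"
    using bound by (simp add: algebra_simps)
  also have "\<dots> \<le> (real k + 1) / 2 * (X - 2)"
    using N(2) \<open>2 \<le> X\<close> by (intro mult_right_mono) auto
  also have "\<dots> \<le> (X / 2 - 1) * real k + X / 2"
    by (simp add: field_simps)
  finally show ?thesis
    using F(3) by (simp add: X_def)
qed

section \<open>The posets D_m\<close>

lemma poset_on_D: "poset_on (D_set m) (D_le m)"
  unfolding poset_on_def D_set_def D_le_def by auto

lemma card_D_set: "card (D_set m) = m + 2"
  unfolding D_set_def by simp

lemma height_D_le: "height (D_set m) (D_le m) \<le> 3"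
proof -
  obtain C where C: "C \<subseteq> D_set m" "is_chain (D_le m) C" "card C = height (D_set m) (D_le m)"
    using height_attained[of "D_set m"] by (auto simp: D_set_def)
  have "finite C"
    using C(1) finite_subset by (auto simp: D_set_def)
  have "card (C - {0, m + 1}) \<le> 1"
    using C(2) \<open>finite C\<close> unfolding is_chain_def D_le_def by (auto simp: card_le_Suc0_iff_eq)
  moreover have "card C - card {0, m + 1} \<le> card (C - {0, m + 1})"
    by (rule diff_card_le_card_Diff) simp
  ultimately show ?thesis
    using C(3) by simp
qed

lemma not_weak_subposet_D_if_few_between:
  assumes "finite F" "\<forall>a\<in>F. \<forall>c\<in>F. card {b \<in> F. le a b \<and> le b c \<and> b \<noteq> a \<and> b \<noteq> c} < m"
  shows "\<not> weak_subposet (D_set m) (D_le m) F le"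
proof
  assume "weak_subposet (D_set m) (D_le m) F le"
  then obtain i where i: "inj_on i (D_set m)" "i ` D_set m \<subseteq> F"
    "\<forall>p\<in>D_set m. \<forall>q\<in>D_set m. D_le m p q \<longrightarrow> le (i p) (i q)"
    unfolding weak_subposet_def by blast
  define between where "between = {b \<in> F. le (i 0) b \<and> le b (i (m + 1)) \<and> b \<noteq> i 0 \<and> b \<noteq> i (m + 1)}"
  have "i 0 \<in> F" "i (m + 1) \<in> F"
    using i(2) by (auto simp: D_set_def)
  then have "card between < m"
    using assms(2) unfolding between_def by blast
  have "i ` {1..m} \<subseteq> between"
  proof
    fix b assume "b \<in> i ` {1..m}"
    then obtain j where j: "j \<in> {1..m}" "b = i j"
      by blast
    have "j \<in> D_set m" "0 \<in> D_set m" "m + 1 \<in> D_set m"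
      using j(1) by (auto simp: D_set_def)
    moreover have "j \<noteq> 0" "j \<noteq> m + 1"
      using j(1) by auto
    ultimately show "b \<in> between"
      using i j(2) unfolding between_def D_le_def inj_on_def by blast
  qed
  then have "card (i ` {1..m}) \<le> card between"
    using assms(1) by (intro card_mono) (simp_all add: between_def)
  moreover have "card (i ` {1..m}) = m"
    using inj_on_subset[OF i(1)] by (simp add: card_image D_set_def)
  ultimately show False
    using \<open>card between < m\<close> by simp
qed

lemma La_grid_D_le:
  assumes "1 \<le> k"
  shows "real (La (grid k) grid_le (D_set m) (D_le m)) \<le> (real m + 3) / 2 * real k + (real m + 5) / 2"
proof -
  have "real (La (grid k) grid_le (D_set m) (D_le m))
      \<le> ((real (card (D_set m)) + real (height (D_set m) (D_le m))) / 2 - 1) * real k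
         + (real (card (D_set m)) + real (height (D_set m) (D_le m))) / 2"
    by (rule La_grid_le[OF _ _ poset_on_D assms]) (auto simp: D_set_def)
  moreover have h3: "real (height (D_set m) (D_le m)) \<le> 3"
    using height_D_le[of m] by simp
  moreover have "real (height (D_set m) (D_le m)) * real k \<le> 3 * real k"
    using h3 by (intro mult_right_mono) simp_all
  ultimately show ?thesis
    unfolding card_D_set by (simp add: field_simps)
qed

lemma grid_le_between_in_rank_window:
  assumes "grid_le a b" "grid_le b c" "b \<noteq> a" "b \<noteq> c"
    and "s \<le> fst a + snd a" "fst c + snd c \<le> s + 2"
  shows "fst a + snd a = s \<and> (b = (Suc (fst a), snd a) \<or> b = (fst a, Suc (snd a)))"
  using assms unfolding grid_le_def prod_eq_iff by auto

definition middle_strip :: "nat \<Rightarrow> (nat \<times> nat) set" where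
  "middle_strip k = {u \<in> grid k. k + 1 \<le> fst u + snd u \<and> fst u + snd u \<le> k + 3}"

definition thinned_middle_strip :: "nat \<Rightarrow> (nat \<times> nat) set" where
  "thinned_middle_strip k = {u \<in> middle_strip k. fst u + snd u = k + 2 \<longrightarrow> even (fst u)}"

lemma finite_middle_strip: "finite (middle_strip k)"
  using finite_grid by (simp add: middle_strip_def)

lemma finite_thinned_middle_strip: "finite (thinned_middle_strip k)"
  using finite_middle_strip by (simp add: thinned_middle_strip_def)

lemma middle_strip_D3_free: "\<not> weak_subposet (D_set 3) (D_le 3) (middle_strip k) grid_le"
proof (rule not_weak_subposet_D_if_few_between[OF finite_middle_strip], intro ballI)
  fix a c assume "a \<in> middle_strip k" "c \<in> middle_strip k"
  then have between: "{b \<in> middle_strip k. grid_le a b \<and> grid_le b c \<and> b \<noteq> a \<and> b \<noteq> c}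
      \<subseteq> {(Suc (fst a), snd a), (fst a, Suc (snd a))}"
    using grid_le_between_in_rank_window[of a _ c "k + 1"] unfolding middle_strip_def by auto
  have "card {b \<in> middle_strip k. grid_le a b \<and> grid_le b c \<and> b \<noteq> a \<and> b \<noteq> c} \<le> 2"
    using finite_middle_strip card_mono[OF _ between] by (simp add: card_insert_if)
  then show "card {b \<in> middle_strip k. grid_le a b \<and> grid_le b c \<and> b \<noteq> a \<and> b \<noteq> c} < 3"
    by simp
qed

lemma thinned_middle_strip_D2_free:
  "\<not> weak_subposet (D_set 2) (D_le 2) (thinned_middle_strip k) grid_le"
proof (rule not_weak_subposet_D_if_few_between[OF finite_thinned_middle_strip], intro ballI)
  fix a c assume ac: "a \<in> thinned_middle_strip k" "c \<in> thinned_middle_strip k"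
  have between: "{b \<in> thinned_middle_strip k. grid_le a b \<and> grid_le b c \<and> b \<noteq> a \<and> b \<noteq> c}
      \<subseteq> {if even (fst a) then (fst a, Suc (snd a)) else (Suc (fst a), snd a)}"
  proof
    fix b assume "b \<in> {b \<in> thinned_middle_strip k. grid_le a b \<and> grid_le b c \<and> b \<noteq> a \<and> b \<noteq> c}"
    then have b: "b \<in> thinned_middle_strip k" "grid_le a b" "grid_le b c" "b \<noteq> a" "b \<noteq> c"
      by auto
    moreover have "k + 1 \<le> fst a + snd a" "fst c + snd c \<le> k + 1 + 2"
      using ac by (auto simp: thinned_middle_strip_def middle_strip_def)
    ultimately have "fst a + snd a = k + 1" and two: "b = (Suc (fst a), snd a) \<or> b = (fst a, Suc (snd a))"
      using grid_le_between_in_rank_window[of a b c "k + 1"] by blast+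
    then have "even (fst b)"
      using b(1) by (auto simp: thinned_middle_strip_def)
    with two show "b \<in> {if even (fst a) then (fst a, Suc (snd a)) else (Suc (fst a), snd a)}"
      by auto
  qed
  have "card {b \<in> thinned_middle_strip k. grid_le a b \<and> grid_le b c \<and> b \<noteq> a \<and> b \<noteq> c} \<le> 1"
    using finite_thinned_middle_strip card_mono[OF _ between] by simp
  then show "card {b \<in> thinned_middle_strip k. grid_le a b \<and> grid_le b c \<and> b \<noteq> a \<and> b \<noteq> c} < 2"
    by simp
qed

lemma inj_on_antidiagonal_shear: "inj_on (\<lambda>(x, t). (x, k + t - x)) ({..k} \<times> (UNIV :: nat set))"
  by (rule inj_onI) (auto split: prod.splits)

lemma card_middle_strip: "3 * k \<le> card (middle_strip k) + 6"
proof -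
  let ?shear = "\<lambda>(x, t). (x, k + t - x)"
  have "?shear ` ({3..k} \<times> {1, 2, 3}) \<subseteq> middle_strip k"
    by (auto simp: middle_strip_def grid_def)
  then have "card (?shear ` ({3..k} \<times> {1, 2, 3})) \<le> card (middle_strip k)"
    by (rule card_mono[OF finite_middle_strip])
  moreover have "card (?shear ` ({3..k} \<times> {1, 2, 3})) = 3 * (k - 2)"
    by (subst card_image) (auto intro: inj_on_subset[OF inj_on_antidiagonal_shear] simp: card_cartesian_product)
  ultimately show ?thesis
    by linarith
qed

lemma card_thinned_middle_strip: "5 * k \<le> 2 * card (thinned_middle_strip k) + 12"
proof -
  let ?shear = "\<lambda>(x, t). (x, k + t - x)"
  define A :: "(nat \<times> nat) set" where "A = {3..k} \<times> {1, 3} \<union> ((*) 2 ` {2..k div 2}) \<times> {2}"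
  have "A \<subseteq> {..k} \<times> UNIV"
    unfolding A_def by auto
  have "?shear ` A \<subseteq> thinned_middle_strip k"
    unfolding A_def by (auto simp: thinned_middle_strip_def middle_strip_def grid_def)
  then have "card (?shear ` A) \<le> card (thinned_middle_strip k)"
    by (rule card_mono[OF finite_thinned_middle_strip])
  moreover have "card (?shear ` A) = card A"
    using inj_on_subset[OF inj_on_antidiagonal_shear \<open>A \<subseteq> {..k} \<times> UNIV\<close>] by (rule card_image)
  moreover have "card A = 2 * (k - 2) + (k div 2 - 1)"
    unfolding A_def by (subst card_Un_disjoint) (auto simp: card_cartesian_product card_image inj_on_mult)
  ultimately show ?thesis
    by linarith
qed

lemma La_grid_D3_ge: "3 * k \<le> La (grid k) grid_le (D_set 3) (D_le 3) + 6"
proof -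
  have "middle_strip k \<subseteq> grid k"
    by (auto simp: middle_strip_def)
  then have "card (middle_strip k) \<le> La (grid k) grid_le (D_set 3) (D_le 3)"
    by (rule card_le_La[OF finite_grid _ middle_strip_D3_free])
  then show ?thesis
    using card_middle_strip[of k] by linarith
qed

lemma La_grid_D2_ge: "5 * k \<le> 2 * La (grid k) grid_le (D_set 2) (D_le 2) + 12"
proof -
  have "thinned_middle_strip k \<subseteq> grid k"
    by (auto simp: thinned_middle_strip_def middle_strip_def)
  then have "card (thinned_middle_strip k) \<le> La (grid k) grid_le (D_set 2) (D_le 2)"
    by (rule card_le_La[OF finite_grid _ thinned_middle_strip_D2_free])
  then show ?thesis
    using card_thinned_middle_strip[of k] by linarith
qed

lemma La_grid_D2_asymptotic:
  "\<exists>C::real. \<forall>k::nat\<ge>1. \<bar>real (La (grid k) grid_le (D_set 2) (D_le 2)) - 5/2 * real k\<bar> \<le> C"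
proof (intro exI allI impI)
  fix k :: nat assume "1 \<le> k"
  then show "\<bar>real (La (grid k) grid_le (D_set 2) (D_le 2)) - 5/2 * real k\<bar> \<le> 6"
    using La_grid_D_le[of k 2] La_grid_D2_ge[of k] by simp
qed

lemma La_grid_D3_asymptotic:
  "\<exists>C::real. \<forall>k::nat\<ge>1. \<bar>real (La (grid k) grid_le (D_set 3) (D_le 3)) - 3 * real k\<bar> \<le> C"
proof (intro exI allI impI)
  fix k :: nat assume "1 \<le> k"
  then show "\<bar>real (La (grid k) grid_le (D_set 3) (D_le 3)) - 3 * real k\<bar> \<le> 6"
    using La_grid_D_le[of k 3] La_grid_D3_ge[of k] by simp
qed

theorem proposition1p6:
  shows "(\<forall>(P::'a set) leP. finite P \<and> P \<noteq> {} \<and> poset_on P leP \<longrightarrow>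
            (\<exists>C::real. \<forall>k::nat\<ge>1.
               real (La (grid k) grid_le P leP)
                 \<le> ((real (card P) + real (height P leP)) / 2 - 1) * real k + C))
       \<and> (\<exists>C::real. \<forall>k::nat\<ge>1.
               \<bar>real (La (grid k) grid_le (D_set 2) (D_le 2)) - 5/2 * real k\<bar> \<le> C)
       \<and> (\<exists>C::real. \<forall>k::nat\<ge>1.
               \<bar>real (La (grid k) grid_le (D_set 3) (D_le 3)) - 3 * real k\<bar> \<le> C)"
proof (intro conjI allI impI)
  fix P :: "'a set" and leP
  assume "finite P \<and> P \<noteq> {} \<and> poset_on P leP"
  then show "\<exists>C. \<forall>k\<ge>1. real (La (grid k) grid_le P leP)
      \<le> ((real (card P) + real (height P leP)) / 2 - 1) * real k + C"
    by (intro exI[of _ "(real (card P) + real (height P leP)) / 2"] allI impI La_grid_le) auto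
qed (fact La_grid_D2_asymptotic La_grid_D3_asymptotic)+

end
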